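(* Fix a positive integer $n$ and let $f_n(z)=\frac{z^n(2-z)}{2z-1}$, defined on $\mathbb{D}\setminus\{1/2\}$. Then $f_n\in\mathcal{S}_1$, and there exist $\delta_n>0$ and $\delta_n'>0$ such that: $P_n(f_n;z_1,\dots,z_n)$ is positive semidefinite for all distinct $z_1,\dots,z_n$ with $|z_i|<\delta_n$; and $P_{n+1}(f_n;z_1,\dots,z_{n+1})$ has exactly one negative eigenvalue for all distinct $z_1,\dots,z_{n+1}$ with $|z_i|<\delta_n'$.
   Context: $\mathbb{D}$ is the open unit disk. Pick matrix: $P_n(f;z_1,\dots,z_n)=\left[\frac{1-f(z_i)\overline{f(z_j)}}{1-z_i\overline{z_j}}\right]_{i,j=1}^n$. $\mathcal{S}_\kappa$: functions defined on $\mathbb{D}\setminus\Lambda$ for a discrete $\Lambda$ (at most countable, accumulating only on the unit circle) all of whose Pick matrices at distinct points have at most $\kappa$ negative eigenvalues, at least one having exactly $\kappa$. *)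

theory Defs
  imports "HOL-Analysis.Analysis" "Jordan_Normal_Form.Char_Poly" "Jordan_Normal_Form.Schur_Decomposition"
begin

definition pick_matrix :: "(complex \<Rightarrow> complex) \<Rightarrow> nat \<Rightarrow> (nat \<Rightarrow> complex) \<Rightarrow> complex mat" where
  "pick_matrix f n z = mat n n (\<lambda>(i,j). (1 - f (z i) * cnj (f (z j))) / (1 - z i * cnj (z j)))"

definition num_neg_eigenvalues :: "complex mat \<Rightarrow> nat" where
  "num_neg_eigenvalues A =
     (\<Sum>r \<in> {r. eigenvalue A r \<and> r \<in> \<real> \<and> Re r < 0}. Polynomial.order r (char_poly A))"

definition pos_semidef :: "complex mat \<Rightarrow> bool" where
  "pos_semidef A \<longleftrightarrow> (\<exists>n. A \<in> carrier_mat n n \<and> mat_adjoint A = A \<and>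
      (\<forall>v \<in> carrier_vec n. 0 \<le> Re ((A *\<^sub>v v) \<bullet>c v) \<and> Im ((A *\<^sub>v v) \<bullet>c v) = 0))"

definition admissible_exc :: "complex set \<Rightarrow> bool" where
  "admissible_exc \<Lambda> \<longleftrightarrow> \<Lambda> \<subseteq> ball 0 1 \<and> countable \<Lambda> \<and> (\<forall>z \<in> ball 0 1. \<not> z islimpt \<Lambda>)"

definition S_kappa :: "nat \<Rightarrow> complex set \<Rightarrow> (complex \<Rightarrow> complex) \<Rightarrow> bool" where
  "S_kappa \<kappa> \<Lambda> f \<longleftrightarrow> admissible_exc \<Lambda> \<and>
     (\<forall>n z. inj_on z {..<n} \<and> z ` {..<n} \<subseteq> ball 0 1 - \<Lambda> \<longrightarrow>
        num_neg_eigenvalues (pick_matrix f n z) \<le> \<kappa>) \<and>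
     (\<exists>n z. inj_on z {..<n} \<and> z ` {..<n} \<subseteq> ball 0 1 - \<Lambda> \<and>
        num_neg_eigenvalues (pick_matrix f n z) = \<kappa>)"

end

theory Submission
  imports Defs
begin

text \<open>
  The Pick kernel of \<open>f\<^sub>n\<close> splits as
  \<open>(1 - f\<^sub>n(z) f\<^sub>n(w)\<^sup>*) / (1 - z w\<^sup>*) = (\<Sum>k<n. (z w\<^sup>*)\<^sup>k) - 3 g\<^sub>n(z) g\<^sub>n(w)\<^sup>*\<close> with
  \<open>g\<^sub>n(z) = z\<^sup>n / (2z - 1)\<close>, so the quadratic form of any Pick matrix at a vector \<open>v\<close> is a sum of
  squared moments \<open>|\<Sum>i. z\<^sub>i\<^sup>k v\<^sub>i\<^sup>*|\<^sup>2\<close> minus \<open>3 |\<Sum>i. g\<^sub>n(z\<^sub>i) v\<^sub>i\<^sup>*|\<^sup>2\<close>. It is nonnegative on a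
  hyperplane, hence (spectral theorem) there is at most one negative eigenvalue.

  On \<open>n + 1\<close> distinct nodes, weighting by divided differences annihilates all moments of order
  \<open>< n\<close> but not the \<open>g\<^sub>n\<close>-term, because on the nodes \<open>g\<^sub>n\<close> coincides with a polynomial of degree
  \<open>n\<close> with nonzero leading coefficient; this gives a negative direction.

  On \<open>n\<close> nodes of modulus at most \<open>\<delta>\<^sub>n\<close>, \<open>g\<^sub>n\<close> coincides on the nodes with a polynomial of
  degree \<open>< n\<close> whose coefficients are \<open>O(\<delta>\<^sub>n)\<close>, so by Cauchy--Schwarz the \<open>g\<^sub>n\<close>-term is
  dominated by the moments.
\<close>

section \<open>Adjoints and unitary triangularisation\<close>

lemma dim_mat_adjoint [simp]:
  "dim_row (mat_adjoint A) = dim_col A" "dim_col (mat_adjoint A) = dim_row A"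
  unfolding mat_adjoint_def by (auto simp: mat_of_rows_def)

lemma index_mat_adjoint [simp]:
  "i < dim_col A \<Longrightarrow> j < dim_row A \<Longrightarrow> mat_adjoint A $$ (i, j) = conjugate (A $$ (j, i))"
  unfolding mat_adjoint_def by (simp add: mat_of_rows_index)

lemma mat_adjoint_carrier [simp]: "A \<in> carrier_mat n m \<Longrightarrow> mat_adjoint A \<in> carrier_mat m n"
  by (metis dim_mat_adjoint carrier_matD carrier_matI)

lemma mat_adjoint_mat_adjoint [simp]: "mat_adjoint (mat_adjoint A) = A"
  by (rule eq_matI) auto

lemma mat_adjoint_mult:
  fixes A :: "'a :: conjugatable_field mat"
  assumes "A \<in> carrier_mat n m" "B \<in> carrier_mat m k"
  shows "mat_adjoint (A * B) = mat_adjoint B * mat_adjoint A"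
proof (rule eq_matI)
  fix i j assume "i < dim_row (mat_adjoint B * mat_adjoint A)" "j < dim_col (mat_adjoint B * mat_adjoint A)"
  with assms have i: "i < k" and j: "j < n" by auto
  have "mat_adjoint (A * B) $$ (i, j) = conjugate (row A j \<bullet> col B i)"
    using i j assms by auto
  also have "\<dots> = row (mat_adjoint B) i \<bullet> col (mat_adjoint A) j"
    using i j assms unfolding scalar_prod_def
    by (auto simp: sum_conjugate conjugate_dist_mul mult.commute intro!: sum.cong)
  finally show "mat_adjoint (A * B) $$ (i, j) = (mat_adjoint B * mat_adjoint A) $$ (i, j)"
    using i j assms by auto
qed (use assms in auto)

lemma cscalar_prod_mult_mat_vec:
  fixes A :: "'a :: conjugatable_field mat"
  assumes "A \<in> carrier_mat n m" "x \<in> carrier_vec m" "y \<in> carrier_vec n"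
  shows "(A *\<^sub>v x) \<bullet>c y = x \<bullet>c (mat_adjoint A *\<^sub>v y)"
proof -
  have "(A *\<^sub>v x) \<bullet>c y = (\<Sum>i<n. (\<Sum>j<m. A $$ (i, j) * x $ j) * conjugate (y $ i))"
    using assms by (auto simp: scalar_prod_def lessThan_atLeast0 intro!: sum.cong)
  also have "\<dots> = (\<Sum>j<m. \<Sum>i<n. A $$ (i, j) * x $ j * conjugate (y $ i))"
    by (simp add: sum_distrib_right sum.swap[of _ "{..<n}"])
  also have "\<dots> = (\<Sum>j<m. x $ j * conjugate (\<Sum>i<n. conjugate (A $$ (i, j)) * y $ i))"
    by (auto simp: sum_conjugate conjugate_dist_mul sum_distrib_left mult_ac intro!: sum.cong)
  also have "\<dots> = x \<bullet>c (mat_adjoint A *\<^sub>v y)"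
    using assms by (auto simp: scalar_prod_def lessThan_atLeast0 intro!: sum.cong)
  finally show ?thesis .
qed

lemma mat_adjoint_four_block_one:
  assumes "P \<in> carrier_mat m m"
  shows "mat_adjoint (four_block_mat (1\<^sub>m 1) (0\<^sub>m 1 m) (0\<^sub>m m 1) (P :: complex mat))
    = four_block_mat (1\<^sub>m 1) (0\<^sub>m 1 m) (0\<^sub>m m 1) (mat_adjoint P)"
  by (rule eq_matI) (use assms in \<open>auto simp: index_mat_four_block\<close>)

definition vec_normalize :: "complex vec \<Rightarrow> complex vec" where
  "vec_normalize x = (1 / complex_of_real (sqrt (Re (x \<bullet>c x)))) \<cdot>\<^sub>v x"

lemma vec_normalize_carrier [simp]: "x \<in> carrier_vec n \<Longrightarrow> vec_normalize x \<in> carrier_vec n"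
  unfolding vec_normalize_def by simp

lemma cscalar_prod_vec_normalize:
  assumes "x \<in> carrier_vec n" "y \<in> carrier_vec n"
  shows "vec_normalize x \<bullet>c vec_normalize y
    = complex_of_real (1 / (sqrt (Re (x \<bullet>c x)) * sqrt (Re (y \<bullet>c y)))) * (x \<bullet>c y)"
  using assms unfolding vec_normalize_def by (simp add: conjugate_smult_vec)

lemma cscalar_prod_self_pos:
  assumes "x \<in> carrier_vec n" "x \<noteq> 0\<^sub>v n"
  shows "x \<bullet>c x = complex_of_real (Re (x \<bullet>c x))" "Re (x \<bullet>c x) > 0"
  using conjugate_square_ge_0_vec[of x] conjugate_square_greater_0_vec[OF assms(1)] assms
  by (auto simp: less_eq_complex_def less_complex_def complex_eq_iff)

lemma vec_normalize_unit:
  assumes "x \<in> carrier_vec n" "x \<noteq> 0\<^sub>v n"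
  shows "vec_normalize x \<bullet>c vec_normalize x = 1"
proof -
  define r where "r = Re (x \<bullet>c x)"
  have "r > 0" and "x \<bullet>c x = complex_of_real r"
    using cscalar_prod_self_pos[OF assms] unfolding r_def by auto
  moreover have "sqrt r * sqrt r = r" using \<open>r > 0\<close> by simp
  ultimately show ?thesis
    unfolding cscalar_prod_vec_normalize[OF assms(1) assms(1)] r_def[symmetric]
    by (simp flip: of_real_mult)
qed

lemma vec_normalize_eigenvector:
  assumes "A \<in> carrier_mat n n" "x \<in> carrier_vec n" "A *\<^sub>v x = e \<cdot>\<^sub>v x"
  shows "A *\<^sub>v vec_normalize x = e \<cdot>\<^sub>v vec_normalize x"
  using assms unfolding vec_normalize_def by (simp add: mult_mat_vec smult_smult_assoc mult.commute)

lemma corthogonal_map_vec_normalize: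
  assumes "set ws \<subseteq> carrier_vec n" "corthogonal ws"
  shows "corthogonal (map vec_normalize ws)"
proof (rule corthogonalI)
  fix i j assume "i < length (map vec_normalize ws)" "j < length (map vec_normalize ws)"
  hence i: "i < length ws" and j: "j < length ws" by auto
  have c: "ws ! i \<in> carrier_vec n" "ws ! j \<in> carrier_vec n" using assms i j by auto
  have "ws ! k \<noteq> 0\<^sub>v n" if "k < length ws" for k
    using corthogonalD[OF assms(2) that that] by auto
  hence "Re (ws ! i \<bullet>c ws ! i) > 0" "Re (ws ! j \<bullet>c ws ! j) > 0"
    using cscalar_prod_self_pos(2) c i j by blast+
  then show "(map vec_normalize ws ! i \<bullet>c map vec_normalize ws ! j = 0) = (i \<noteq> j)"
    using i j cscalar_prod_vec_normalize[OF c] corthogonalD[OF assms(2) i j] by auto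
qed

lemma corthogonal_inv_eq_mat_adjoint:
  assumes "set ws \<subseteq> carrier_vec n" "\<And>w. w \<in> set ws \<Longrightarrow> w \<bullet>c w = 1"
  shows "corthogonal_inv (mat_of_cols n ws) = mat_adjoint (mat_of_cols n ws)"
  unfolding corthogonal_inv_def mat_adjoint_def
  by (rule arg_cong[of _ _ "mat_of_rows _"])
    (use assms in \<open>auto simp: vec_inv_def cols_mat_of_cols intro!: map_cong\<close>)

lemma orthonormal_basis_extending:
  fixes v :: "complex vec"
  assumes v: "v \<in> carrier_vec n" and v0: "v \<noteq> 0\<^sub>v n"
  obtains ws where "set ws \<subseteq> carrier_vec n" "corthogonal ws" "length ws = n"
    "hd ws = vec_normalize v" "\<And>w. w \<in> set ws \<Longrightarrow> w \<bullet>c w = 1"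
proof -
  have n: "n \<noteq> 0"
  proof
    assume "n = 0"
    with v have "v = 0\<^sub>v n" by (intro eq_vecI) auto
    with v0 show False ..
  qed
  interpret cof_vec_space n "TYPE(complex)" .
  define b where "b = basis_completion v"
  from basis_completion[OF v v0, folded b_def]
  have b: "set b \<subseteq> carrier_vec n" "distinct b" "\<not> lin_dep (set b)" "hd b = v" "length b = n"
    by auto
  then obtain vs where bv: "b = v # vs" using n by (cases b) auto
  define ws0 where "ws0 = gram_schmidt n b"
  have ws0: "set ws0 \<subseteq> carrier_vec n" "corthogonal ws0" "length ws0 = n"
    using gram_schmidt_result[OF b(1-3) refl, folded ws0_def] b(5) by auto
  have "hd ws0 = v" using gram_schmidt_hd[OF v, of vs, folded bv] unfolding ws0_def .
  show ?thesis
  proof (rule that[of "map vec_normalize ws0"])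
    show "set (map vec_normalize ws0) \<subseteq> carrier_vec n" "length (map vec_normalize ws0) = n"
      using ws0 by auto
    show "corthogonal (map vec_normalize ws0)" by (rule corthogonal_map_vec_normalize[OF ws0(1,2)])
    show "hd (map vec_normalize ws0) = vec_normalize v"
      using \<open>hd ws0 = v\<close> ws0(3) n by (cases ws0) auto
    fix w assume "w \<in> set (map vec_normalize ws0)"
    then obtain k where k: "k < length ws0" "w = vec_normalize (ws0 ! k)" by (auto simp: in_set_conv_nth)
    have "ws0 ! k \<in> carrier_vec n" using ws0(1) nth_mem[OF k(1)] by blast
    moreover have "ws0 ! k \<noteq> 0\<^sub>v n" using corthogonalD[OF ws0(2) k(1) k(1)] by auto
    ultimately show "w \<bullet>c w = 1" unfolding k(2) by (rule vec_normalize_unit)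
  qed
qed

lemma unitary_similar_eigenvector_column:
  fixes A :: "complex mat"
  assumes A: "A \<in> carrier_mat n n" and e: "eigenvalue A e"
  obtains W where "similar_mat_wit A (mat_adjoint W * A * W) W (mat_adjoint W)"
    and "col (mat_adjoint W * A * W) 0 = vec n (\<lambda>i. if i = 0 then e else 0)"
proof -
  define v where "v = find_eigenvector A e"
  have "eigenvector A v e" unfolding v_def by (rule find_eigenvector[OF A e])
  hence v: "v \<in> carrier_vec n" and v0: "v \<noteq> 0\<^sub>v n" and Av: "A *\<^sub>v v = e \<cdot>\<^sub>v v"
    using A unfolding eigenvector_def by auto
  obtain ws where ws: "set ws \<subseteq> carrier_vec n" "corthogonal ws" "length ws = n"
    and hd_ws: "hd ws = vec_normalize v" and unit: "\<And>w. w \<in> set ws \<Longrightarrow> w \<bullet>c w = 1"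
    using orthonormal_basis_extending[OF v v0] by blast
  define W where "W = mat_of_cols n ws"
  have adj: "corthogonal_inv W = mat_adjoint W"
    unfolding W_def by (rule corthogonal_inv_eq_mat_adjoint[OF ws(1) unit])
  have W: "W \<in> carrier_mat n n" and W': "mat_adjoint W \<in> carrier_mat n n"
    using ws unfolding W_def by auto
  have "inverts_mat (mat_adjoint W) W"
    using corthogonal_inv_result[OF orthogonal_mat_of_cols[OF ws], folded W_def] unfolding adj .
  moreover from this have "inverts_mat W (mat_adjoint W)"
    using mat_mult_left_right_inverse[OF W' W] W W' unfolding inverts_mat_def by auto
  ultimately have "similar_mat_wit (mat_adjoint W * A * W) A (mat_adjoint W) W"
    by (intro similar_mat_witI[of _ _ n]) (use W W' A in \<open>auto simp: inverts_mat_def\<close>)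
  from similar_mat_wit_sym[OF this] show ?thesis
  proof (rule that)
    have "n \<noteq> 0" using ws(3) hd_ws v v0 by (cases ws) auto
    moreover have "vec_normalize v \<noteq> 0\<^sub>v n" using vec_normalize_unit[OF v v0] by auto
    ultimately show "col (mat_adjoint W * A * W) 0 = vec n (\<lambda>i. if i = 0 then e else 0)"
      using corthogonal_col_ev_0[OF A vec_normalize_carrier[OF v] _ vec_normalize_eigenvector[OF A v Av]
        _ hd_ws ws] unfolding W_def[symmetric] adj by blast
  qed
qed

lemma unitary_similar_four_block_lower_zero:
  fixes A1 :: "complex mat"
  assumes sim: "similar_mat_wit A3 B P (mat_adjoint P)"
    and A1: "A1 \<in> carrier_mat 1 1" and A2: "A2 \<in> carrier_mat 1 m" and A3: "A3 \<in> carrier_mat m m"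
  defines "Q \<equiv> four_block_mat (1\<^sub>m 1) (0\<^sub>m 1 m) (0\<^sub>m m 1) P"
  shows "similar_mat_wit (four_block_mat A1 A2 (0\<^sub>m m 1) A3)
    (four_block_mat A1 (A2 * P) (0\<^sub>m m 1) B) Q (mat_adjoint Q)"
proof -
  from similar_mat_witD2[OF A3 sim]
  have P: "P \<in> carrier_mat m m" and PP: "P * mat_adjoint P = 1\<^sub>m m" by auto
  have "A2 * P * mat_adjoint P = A2"
    using assoc_mult_mat[OF A2 P, of "mat_adjoint P" m] A2 P PP by simp
  hence UR: "A2 = 1\<^sub>m 1 * (A2 * P) * mat_adjoint P" using A2 by simp
  have LL: "0\<^sub>m m 1 = P * 0\<^sub>m m 1 * 1\<^sub>m 1" using P by simp
  from similar_mat_wit_four_block[OF similar_mat_wit_refl[OF A1] sim UR LL A1 A3]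
  show ?thesis
    unfolding Q_def mat_adjoint_four_block_one[OF P] using A2 P by auto
qed

lemma four_block_first_column:
  assumes A: "A \<in> carrier_mat n n" and n: "n \<noteq> 0"
    and col0: "col A 0 = vec n (\<lambda>i. if i = 0 then e else 0)"
  obtains A2 A3 where "A2 \<in> carrier_mat 1 (n - 1)" "A3 \<in> carrier_mat (n - 1) (n - 1)"
    "A = four_block_mat (mat 1 1 (\<lambda>_. e)) A2 (0\<^sub>m (n - 1) 1) A3"
proof -
  obtain A1 A2 A0 A3 where split: "split_block A 1 1 = (A1, A2, A0, A3)"
    by (cases "split_block A 1 1") auto
  from A n have "dim_row A = 1 + (n - 1)" "dim_col A = 1 + (n - 1)" by auto
  from split_block[OF split this]
  have "A2 \<in> carrier_mat 1 (n - 1)" "A3 \<in> carrier_mat (n - 1) (n - 1)"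
    and A_block: "A = four_block_mat A1 A2 A0 A3" by auto
  moreover have "A $$ (i, 0) = (if i = 0 then e else 0)" if "i < n" for i
    using arg_cong[OF col0, of "\<lambda>v :: 'a vec. v $ i"] A that n by auto
  hence "A1 = mat 1 1 (\<lambda>_. e)" and "A0 = 0\<^sub>m (n - 1) 1"
    using split[unfolded split_block_def Let_def] A n by auto
  ultimately show ?thesis using that by blast
qed

lemma unitary_schur_decomposition:
  fixes A :: "complex mat"
  assumes "A \<in> carrier_mat n n" and "char_poly A = (\<Prod>e \<leftarrow> es. [:- e, 1:])"
  shows "\<exists>B P. similar_mat_wit A B P (mat_adjoint P) \<and> upper_triangular B \<and> diag_mat B = es"
  using assms
proof (induct es arbitrary: n A)
  case Nil
  with degree_monic_char_poly[of A n] have "n = 0" by auto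
  moreover have "mat_adjoint (1\<^sub>m 0) = (1\<^sub>m 0 :: complex mat)" by (rule eq_matI) auto
  ultimately show ?case using Nil
    by (intro exI[of _ A] exI[of _ "1\<^sub>m 0"]) (auto intro: similar_mat_wit_refl simp: diag_mat_def)
next
  case (Cons e es n A)
  have A: "A \<in> carrier_mat n n" by fact
  have cp: "char_poly A = [:- e, 1:] * (\<Prod>e \<leftarrow> es. [:- e, 1:])" using Cons.prems(2) by simp
  have "monic (\<Prod>e \<leftarrow> es. [:- e, 1:])" by (rule monic_prod_list) auto
  hence "degree (char_poly A) = Suc (degree (\<Prod>e \<leftarrow> es. [:- e, 1:]))"
    unfolding cp by (subst degree_mult_eq) auto
  with degree_monic_char_poly[OF A] have n: "n \<noteq> 0" by auto
  have "eigenvalue A e" unfolding eigenvalue_root_char_poly[OF A] cp by simp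
  then obtain W where simW: "similar_mat_wit A (mat_adjoint W * A * W) W (mat_adjoint W)"
    and col0: "col (mat_adjoint W * A * W) 0 = vec n (\<lambda>i. if i = 0 then e else 0)"
    by (rule unitary_similar_eigenvector_column[OF A])
  define A' where "A' = mat_adjoint W * A * W"
  have W: "W \<in> carrier_mat n n" and A': "A' \<in> carrier_mat n n"
    using similar_mat_witD2[OF A simW] unfolding A'_def by auto
  obtain A2 A3 where A2: "A2 \<in> carrier_mat 1 (n - 1)" and A3: "A3 \<in> carrier_mat (n - 1) (n - 1)"
    and A'_block: "A' = four_block_mat (mat 1 1 (\<lambda>_. e)) A2 (0\<^sub>m (n - 1) 1) A3"
    by (rule four_block_first_column[OF A' n col0[folded A'_def]])
  have "[:- e, 1:] * char_poly A3 = char_poly A'"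
    unfolding A'_block by (subst char_poly_four_block_zeros_col[OF _ A2 A3])
      (auto simp: char_poly_defs det_def sign_def)
  also have "\<dots> = char_poly A"
    by (rule char_poly_similar) (use simW in \<open>auto simp: similar_mat_def A'_def intro: similar_mat_wit_sym\<close>)
  finally have "char_poly A3 = (\<Prod>e \<leftarrow> es. [:- e, 1:])"
    unfolding cp by (metis mult_cancel_left pCons_eq_0_iff zero_neq_one)
  from Cons.hyps[OF A3 this] obtain B P where
    simP: "similar_mat_wit A3 B P (mat_adjoint P)" and ut: "upper_triangular B" and diag: "diag_mat B = es"
    by auto
  define Q where "Q = four_block_mat (1\<^sub>m 1) (0\<^sub>m 1 (n - 1)) (0\<^sub>m (n - 1) 1) P"
  define C where "C = four_block_mat (mat 1 1 (\<lambda>_. e)) (A2 * P) (0\<^sub>m (n - 1) 1) B"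
  have simQ: "similar_mat_wit A' C Q (mat_adjoint Q)"
    unfolding A'_block C_def Q_def by (rule unitary_similar_four_block_lower_zero[OF simP _ A2 A3]) simp
  have B: "B \<in> carrier_mat (n - 1) (n - 1)" and Q: "Q \<in> carrier_mat n n"
    using similar_mat_witD2[OF A3 simP] similar_mat_witD2[OF A' simQ] by auto
  have "upper_triangular C"
    unfolding C_def by (rule upper_triangular_four_block[OF _ B _ ut]) auto
  moreover have "diag_mat (mat 1 1 (\<lambda>_. e)) = [e]" by (simp add: diag_mat_def)
  with diag_four_block_mat[of "mat 1 1 (\<lambda>_. e)" 1 B "n - 1"] B have "diag_mat C = e # es"
    unfolding C_def by (simp add: diag)
  moreover have "mat_adjoint (W * Q) = mat_adjoint Q * mat_adjoint W"
    by (rule mat_adjoint_mult[OF W Q])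
  ultimately show ?case
    using similar_mat_wit_trans[OF simW[folded A'_def] simQ] by metis
qed

section \<open>Negative eigenvalues of Hermitian matrices\<close>

lemma order_prod_list_linear:
  "Polynomial.order r (\<Prod>e \<leftarrow> es. [:- e, 1:]) = count_list es (r :: 'a :: {idom, ring_char_0})"
proof (induct es)
  case (Cons e es)
  have "(\<Prod>e \<leftarrow> es. [:- e, 1:] :: 'a poly) \<noteq> 0" unfolding prod_list_zero_iff by auto
  hence "[:- e, 1:] * (\<Prod>e \<leftarrow> es. [:- e, 1:]) \<noteq> 0" by (intro no_zero_divisors) simp_all
  from order_mult[OF this] have "Polynomial.order r (\<Prod>e \<leftarrow> e # es. [:- e, 1:])
      = Polynomial.order r [:- e, 1:] + Polynomial.order r (\<Prod>e \<leftarrow> es. [:- e, 1:])"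
    by simp
  with Cons show ?case by (simp add: order_linear')
qed simp

lemma num_neg_eigenvalues_char_poly:
  assumes A: "A \<in> carrier_mat n n" and cp: "char_poly A = (\<Prod>e \<leftarrow> es. [:- e, 1:])"
  shows "num_neg_eigenvalues A = length (filter (\<lambda>r. r \<in> \<real> \<and> Re r < 0) es)"
proof -
  let ?Q = "\<lambda>r. r \<in> \<real> \<and> Re r < 0"
  have S: "{r. eigenvalue A r \<and> r \<in> \<real> \<and> Re r < 0} = set es \<inter> {r. ?Q r}"
    unfolding eigenvalue_root_char_poly[OF A] cp by (auto simp: poly_prod_list_zero_iff)
  have "num_neg_eigenvalues A = (\<Sum>r \<in> set es \<inter> {r. ?Q r}. count_list es r)"
    unfolding num_neg_eigenvalues_def S cp order_prod_list_linear ..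
  also have "\<dots> = (\<Sum>r \<in> set es \<inter> {r. ?Q r}. count_list (filter ?Q es) r)"
    by (rule sum.cong) (auto simp: count_list_eq_length_filter filter_filter
        intro!: arg_cong[of _ _ length] filter_cong)
  also have "\<dots> = length (filter ?Q es)" by (rule sum_count_set) auto
  finally show ?thesis .
qed

lemma upper_triangular_hermitian_diagonal:
  fixes B :: "complex mat"
  assumes B: "B \<in> carrier_mat n n" and ut: "upper_triangular B" and herm: "mat_adjoint B = B"
    and ij: "i < n" "j < n"
  shows "B $$ (i, j) = (if i = j then complex_of_real (Re (B $$ (i, i))) else 0)"
proof -
  have conj: "B $$ (i, j) = cnj (B $$ (j, i))"
    using arg_cong[OF herm, of "\<lambda>M. M $$ (i, j)"] B ij by auto
  have "B $$ (i, j) = 0 \<and> B $$ (j, i) = 0" if "i \<noteq> j"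
    using ut B ij that conj unfolding upper_triangular_def by (cases "j < i") auto
  with conj show ?thesis by (cases "i = j") (auto simp: Reals_cnj_iff complex_is_Real_iff)
qed

lemma quadratic_form_diagonal:
  fixes B :: "complex mat"
  assumes B: "B \<in> carrier_mat n n" and x: "x \<in> carrier_vec n"
    and diag: "\<And>i j. i < n \<Longrightarrow> j < n \<Longrightarrow> B $$ (i, j) = (if i = j then complex_of_real (d i) else 0)"
  shows "(B *\<^sub>v x) \<bullet>c x = complex_of_real (\<Sum>i<n. d i * (cmod (x $ i))\<^sup>2)"
proof -
  have row: "(\<Sum>j<n. B $$ (i, j) * x $ j) = complex_of_real (d i) * x $ i" if "i < n" for i
  proof -
    have "(\<Sum>j<n. B $$ (i, j) * x $ j) = (\<Sum>j<n. if i = j then complex_of_real (d i) * x $ i else 0)"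
      by (rule sum.cong) (auto simp: diag that)
    thus ?thesis using that by simp
  qed
  have "(B *\<^sub>v x) \<bullet>c x = (\<Sum>i<n. (\<Sum>j<n. B $$ (i, j) * x $ j) * cnj (x $ i))"
    using B x by (auto simp: scalar_prod_def lessThan_atLeast0 intro!: sum.cong)
  also have "\<dots> = (\<Sum>i<n. complex_of_real (d i) * (x $ i * cnj (x $ i)))"
    by (rule sum.cong) (auto simp: row)
  also have "\<dots> = complex_of_real (\<Sum>i<n. d i * (cmod (x $ i))\<^sup>2)"
    by (simp add: complex_mult_cnj cmod_power2 flip: of_real_power)
  finally show ?thesis .
qed

lemma quadratic_form_unitary_similar:
  fixes A :: "complex mat"
  assumes A: "A \<in> carrier_mat n n" and sim: "similar_mat_wit A B P (mat_adjoint P)"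
    and x: "x \<in> carrier_vec n"
  shows "(A *\<^sub>v (P *\<^sub>v x)) \<bullet>c (P *\<^sub>v x) = (B *\<^sub>v x) \<bullet>c x"
proof -
  note wit = similar_mat_witD2[OF A sim]
  have B: "B \<in> carrier_mat n n" and P: "P \<in> carrier_mat n n"
    and PP: "mat_adjoint P * P = 1\<^sub>m n" and A_eq: "A = P * B * mat_adjoint P"
    using wit(5,6,2,3) .
  have unit: "mat_adjoint P *\<^sub>v (P *\<^sub>v x) = x"
    using assoc_mult_mat_vec[OF mat_adjoint_carrier[OF P] P x, symmetric] PP x by simp
  have "A *\<^sub>v (P *\<^sub>v x) = (P * B) *\<^sub>v (mat_adjoint P *\<^sub>v (P *\<^sub>v x))"
    unfolding A_eq using B P x
    by (simp add: assoc_mult_mat_vec[OF mult_carrier_mat[OF P B] mat_adjoint_carrier[OF P]])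
  also have "\<dots> = P *\<^sub>v (B *\<^sub>v x)" unfolding unit using assoc_mult_mat_vec[OF P B x] .
  finally show ?thesis
    using cscalar_prod_mult_mat_vec[OF P, of "B *\<^sub>v x" "P *\<^sub>v x"] B x P unit by auto
qed

lemma hermitian_unitary_diagonalization:
  fixes A :: "complex mat"
  assumes A: "A \<in> carrier_mat n n" and herm: "mat_adjoint A = A"
  obtains U d where "U \<in> carrier_mat n n" "U * mat_adjoint U = 1\<^sub>m n"
    "num_neg_eigenvalues A = card {i. i < n \<and> d i < 0}"
    "\<And>x. x \<in> carrier_vec n \<Longrightarrow>
      (A *\<^sub>v (U *\<^sub>v x)) \<bullet>c (U *\<^sub>v x) = complex_of_real (\<Sum>i<n. d i * (cmod (x $ i))\<^sup>2)"
proof -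
  obtain es where cp: "char_poly A = (\<Prod>e \<leftarrow> es. [:- e, 1:])" and len: "length es = n"
    using char_poly_factorized[OF A] by auto
  obtain B P where sim: "similar_mat_wit A B P (mat_adjoint P)" and ut: "upper_triangular B"
    and diag: "diag_mat B = es"
    using unitary_schur_decomposition[OF A cp] by auto
  note wit = similar_mat_witD2[OF A sim]
  have B: "B \<in> carrier_mat n n" and P: "P \<in> carrier_mat n n"
    and PP: "P * mat_adjoint P = 1\<^sub>m n" and PP': "mat_adjoint P * P = 1\<^sub>m n"
    and A_eq: "A = P * B * mat_adjoint P"
    using wit(5,6,1,2,3) .
  have cancel: "mat_adjoint P * (P * X) = X" if "X \<in> carrier_mat n n" for X
    using assoc_mult_mat[OF mat_adjoint_carrier[OF P] P that] PP' that by simp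
  have "B = mat_adjoint P * A * P"
    unfolding A_eq using P B by (simp add: assoc_mult_mat[of _ n n _ n _ n] cancel PP')
  hence "mat_adjoint B = B"
    using A P herm by (simp add: mat_adjoint_mult[of _ n n _ n] assoc_mult_mat[of _ n n _ n _ n])
  define d where "d i = Re (B $$ (i, i))" for i
  have B_diag: "B $$ (i, j) = (if i = j then complex_of_real (d i) else 0)" if "i < n" "j < n" for i j
    unfolding d_def by (rule upper_triangular_hermitian_diagonal[OF B ut \<open>mat_adjoint B = B\<close> that])
  have "es ! i = complex_of_real (d i)" if "i < n" for i
    using diag[symmetric] that B B_diag[OF that that] unfolding diag_mat_def by auto
  hence "num_neg_eigenvalues A = card {i. i < n \<and> d i < 0}"
    unfolding num_neg_eigenvalues_char_poly[OF A cp] length_filter_conv_card len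
    by (intro arg_cong[of _ _ card]) auto
  with P PP show ?thesis
    using quadratic_form_unitary_similar[OF A sim] quadratic_form_diagonal[OF B _ B_diag] that by auto
qed

lemma num_neg_eigenvalues_pos:
  fixes A :: "complex mat"
  assumes A: "A \<in> carrier_mat n n" and herm: "mat_adjoint A = A"
    and v: "v \<in> carrier_vec n" and neg: "Re ((A *\<^sub>v v) \<bullet>c v) < 0"
  shows "num_neg_eigenvalues A > 0"
proof -
  obtain U d where U: "U \<in> carrier_mat n n" "U * mat_adjoint U = 1\<^sub>m n"
    and count: "num_neg_eigenvalues A = card {i. i < n \<and> d i < 0}"
    and qf: "\<And>x. x \<in> carrier_vec n \<Longrightarrow>
      (A *\<^sub>v (U *\<^sub>v x)) \<bullet>c (U *\<^sub>v x) = complex_of_real (\<Sum>i<n. d i * (cmod (x $ i))\<^sup>2)"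
    using hermitian_unitary_diagonalization[OF A herm] by blast
  define x where "x = mat_adjoint U *\<^sub>v v"
  have x: "x \<in> carrier_vec n" unfolding x_def by (rule mult_mat_vec_carrier[OF mat_adjoint_carrier[OF U(1)] v])
  have "U *\<^sub>v x = v"
    unfolding x_def using assoc_mult_mat_vec[OF U(1) mat_adjoint_carrier[OF U(1)] v, symmetric] U v
    by simp
  with qf[OF x] neg have "(\<Sum>i<n. d i * (cmod (x $ i))\<^sup>2) < 0" by simp
  then obtain i where "i < n" "d i < 0"
    by (metis (no_types, lifting) lessThan_iff linorder_not_le mult_nonneg_nonneg sum_nonneg
        zero_le_power2)
  hence "{i. i < n \<and> d i < 0} \<noteq> {}" by auto
  thus ?thesis unfolding count by (simp add: card_gt_0_iff)
qed

lemma exists_orthogonal_vec_two_coords: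
  fixes u :: "complex vec"
  assumes u: "u \<in> carrier_vec n" and ij: "i < n" "j < n" "i \<noteq> j"
  obtains x :: "complex vec" where "x \<in> carrier_vec n" "x \<bullet>c u = 0" "x $ i \<noteq> 0 \<or> x $ j \<noteq> 0"
    "\<And>k. k < n \<Longrightarrow> k \<noteq> i \<Longrightarrow> k \<noteq> j \<Longrightarrow> x $ k = 0"
proof -
  define a where "a = (if u $ i = 0 \<and> u $ j = 0 then 1 else cnj (u $ j))"
  define b where "b = (if u $ i = 0 \<and> u $ j = 0 then 0 else - cnj (u $ i))"
  define x where "x = vec n (\<lambda>k. if k = i then a else if k = j then b else 0)"
  have "x \<bullet>c u = (\<Sum>k<n. x $ k * cnj (u $ k))"
    using u by (auto simp: scalar_prod_def lessThan_atLeast0)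
  also have "\<dots> = (\<Sum>k\<in>{i, j}. x $ k * cnj (u $ k))"
    using ij by (intro sum.mono_neutral_right) (auto simp: x_def)
  also have "\<dots> = 0" using ij by (simp add: x_def a_def b_def)
  finally have "x \<bullet>c u = 0" .
  show ?thesis by (rule that[of x]) (use ij \<open>x \<bullet>c u = 0\<close> in \<open>auto simp: x_def a_def b_def\<close>)
qed

lemma num_neg_eigenvalues_le_1:
  fixes A :: "complex mat"
  assumes A: "A \<in> carrier_mat n n" and herm: "mat_adjoint A = A" and w: "w \<in> carrier_vec n"
    and nonneg: "\<And>v. v \<in> carrier_vec n \<Longrightarrow> v \<bullet>c w = 0 \<Longrightarrow> Re ((A *\<^sub>v v) \<bullet>c v) \<ge> 0"
  shows "num_neg_eigenvalues A \<le> 1"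
proof (rule ccontr)
  assume "\<not> num_neg_eigenvalues A \<le> 1"
  obtain U d where U: "U \<in> carrier_mat n n"
    and count: "num_neg_eigenvalues A = card {i. i < n \<and> d i < 0}"
    and qf: "\<And>x. x \<in> carrier_vec n \<Longrightarrow>
      (A *\<^sub>v (U *\<^sub>v x)) \<bullet>c (U *\<^sub>v x) = complex_of_real (\<Sum>i<n. d i * (cmod (x $ i))\<^sup>2)"
    using hermitian_unitary_diagonalization[OF A herm] by blast
  with \<open>\<not> num_neg_eigenvalues A \<le> 1\<close> have "2 \<le> card {i. i < n \<and> d i < 0}" by simp
  then obtain i j where ij: "i < n" "j < n" "i \<noteq> j" and neg: "d i < 0" "d j < 0"
    by (auto simp: numeral_2_eq_2 card_le_Suc_iff)
  obtain x :: "complex vec" where x: "x \<in> carrier_vec n" and orth: "x \<bullet>c (mat_adjoint U *\<^sub>v w) = 0"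
    and nz: "x $ i \<noteq> 0 \<or> x $ j \<noteq> 0" and supp: "\<And>k. k < n \<Longrightarrow> k \<noteq> i \<Longrightarrow> k \<noteq> j \<Longrightarrow> x $ k = 0"
    using exists_orthogonal_vec_two_coords[OF mult_mat_vec_carrier[OF mat_adjoint_carrier[OF U] w] ij]
    by blast
  have "(U *\<^sub>v x) \<bullet>c w = 0" using cscalar_prod_mult_mat_vec[OF U x w] orth by simp
  with nonneg[of "U *\<^sub>v x"] U x
  have "0 \<le> (\<Sum>k<n. d k * (cmod (x $ k))\<^sup>2)" using qf[OF x] by simp
  also have "(\<Sum>k<n. d k * (cmod (x $ k))\<^sup>2) = (\<Sum>k\<in>{i, j}. d k * (cmod (x $ k))\<^sup>2)"
    using ij supp by (intro sum.mono_neutral_right) auto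
  also have "\<dots> < 0"
    using ij neg nz by (auto simp: add_neg_nonpos add_nonpos_neg mult_neg_pos mult_nonpos_nonneg)
  finally show False by simp
qed

section \<open>The Pick kernel of \<open>f\<^sub>n\<close>\<close>

definition f_n :: "nat \<Rightarrow> complex \<Rightarrow> complex" where
  "f_n n z = z ^ n * (2 - z) / (2 * z - 1)"

definition g_n :: "nat \<Rightarrow> complex \<Rightarrow> complex" where
  "g_n n z = z ^ n / (2 * z - 1)"

lemma pick_kernel_f_n:
  fixes z w :: complex
  assumes z: "2 * z - 1 \<noteq> 0" and w: "2 * w - 1 \<noteq> 0" and zw: "1 - z * cnj w \<noteq> 0"
  shows "(1 - f_n n z * cnj (f_n n w)) / (1 - z * cnj w)
    = (\<Sum>k<n. z ^ k * cnj w ^ k) - 3 * g_n n z * cnj (g_n n w)"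
proof -
  define u where "u = z * cnj w"
  define D where "D = (2 * z - 1) * (2 * cnj w - 1)"
  have "2 * cnj w - 1 = cnj (2 * w - 1)" by simp
  with z w have D: "D \<noteq> 0" unfolding D_def by (metis complex_cnj_zero_iff mult_eq_0_iff)
  have geometric: "(\<Sum>k<n. z ^ k * cnj w ^ k) = (1 - u ^ n) / (1 - u)"
    using one_diff_power_eq[of u n] zw unfolding u_def by (simp add: power_mult_distrib field_simps)
  have f: "f_n n z * cnj (f_n n w) = u ^ n * (D + 3 * (1 - u)) / D"
    unfolding f_n_def u_def D_def by (simp add: power_mult_distrib algebra_simps)
  have g: "g_n n z * cnj (g_n n w) = u ^ n / D"
    unfolding g_n_def u_def D_def by (simp add: power_mult_distrib)
  have "(1 - u ^ n * (D + 3 * (1 - u)) / D) / (1 - u) = (1 - u ^ n) / (1 - u) - 3 * (u ^ n / D)"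
    using D zw unfolding u_def by (simp add: field_simps)
  thus ?thesis unfolding f geometric mult.assoc g u_def[symmetric] .
qed

lemma index_pick_matrix:
  "i < m \<Longrightarrow> j < m \<Longrightarrow>
    pick_matrix f m z $$ (i, j) = (1 - f (z i) * cnj (f (z j))) / (1 - z i * cnj (z j))"
  unfolding pick_matrix_def by simp

lemma dim_pick_matrix [simp]: "dim_row (pick_matrix f m z) = m" "dim_col (pick_matrix f m z) = m"
  unfolding pick_matrix_def by simp_all

lemma pick_matrix_carrier [simp]: "pick_matrix f m z \<in> carrier_mat m m"
  by (simp add: carrier_matI)

lemma pick_matrix_hermitian: "mat_adjoint (pick_matrix f m z) = pick_matrix f m z"
  by (rule eq_matI) (auto simp: index_pick_matrix pick_matrix_def mult.commute)

definition node_pairing :: "nat \<Rightarrow> (nat \<Rightarrow> complex) \<Rightarrow> complex vec \<Rightarrow> (complex \<Rightarrow> complex) \<Rightarrow> complex"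
  where "node_pairing m z v h = (\<Sum>i<m. h (z i) * cnj (v $ i))"

lemma quadratic_form_pick_f_n:
  assumes z: "\<And>i. i < m \<Longrightarrow> z i \<in> ball 0 1 - {1/2}" and v: "v \<in> carrier_vec m"
  shows "(pick_matrix (f_n n) m z *\<^sub>v v) \<bullet>c v = complex_of_real
    ((\<Sum>k<n. (cmod (node_pairing m z v (\<lambda>x. x ^ k)))\<^sup>2) - 3 * (cmod (node_pairing m z v (g_n n)))\<^sup>2)"
proof -
  have entry: "pick_matrix (f_n n) m z $$ (i, j)
      = (\<Sum>k<n. z i ^ k * cnj (z j ^ k)) - 3 * (g_n n (z i) * cnj (g_n n (z j)))"
    if "i < m" "j < m" for i j
  proof -
    have "2 * z i - 1 \<noteq> 0" "2 * z j - 1 \<noteq> 0" using z that by (auto simp: field_simps)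
    moreover have "cmod (z i) < 1" "cmod (z j) < 1" using z that by auto
    hence "cmod (z i * cnj (z j)) < 1"
      using mult_left_le_one_le[of "cmod (z j)" "cmod (z i)"] by (simp add: norm_mult)
    hence "1 - z i * cnj (z j) \<noteq> 0" by auto
    ultimately show ?thesis using that by (simp add: index_pick_matrix pick_kernel_f_n mult.assoc)
  qed
  have sq: "(\<Sum>i<m. \<Sum>j<m. a i * cnj (a j) * v $ j * cnj (v $ i))
      = complex_of_real ((cmod (\<Sum>i<m. a i * cnj (v $ i)))\<^sup>2)" for a :: "nat \<Rightarrow> complex"
    unfolding complex_norm_square by (simp add: cnj_sum sum_product mult_ac)
  have "(pick_matrix (f_n n) m z *\<^sub>v v) \<bullet>c v
      = (\<Sum>i<m. (\<Sum>j<m. pick_matrix (f_n n) m z $$ (i, j) * v $ j) * cnj (v $ i))"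
    using v by (auto simp: scalar_prod_def lessThan_atLeast0 intro!: sum.cong)
  also have "\<dots> = (\<Sum>k<n. \<Sum>i<m. \<Sum>j<m. z i ^ k * cnj (z j ^ k) * v $ j * cnj (v $ i))
      - 3 * (\<Sum>i<m. \<Sum>j<m. g_n n (z i) * cnj (g_n n (z j)) * v $ j * cnj (v $ i))"
    by (simp add: entry algebra_simps sum_subtractf sum_distrib_left sum_distrib_right
        sum.swap[of _ "{..<n}"])
  also have "\<dots> = complex_of_real
      ((\<Sum>k<n. (cmod (node_pairing m z v (\<lambda>x. x ^ k)))\<^sup>2) - 3 * (cmod (node_pairing m z v (g_n n)))\<^sup>2)"
    unfolding sq node_pairing_def by simp
  finally show ?thesis .
qed

lemma num_neg_eigenvalues_pick_f_n_le_1: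
  assumes z: "\<And>i. i < m \<Longrightarrow> z i \<in> ball 0 1 - {1/2}"
  shows "num_neg_eigenvalues (pick_matrix (f_n n) m z) \<le> 1"
proof (rule num_neg_eigenvalues_le_1[OF pick_matrix_carrier pick_matrix_hermitian])
  show "vec m (\<lambda>i. g_n n (z i)) \<in> carrier_vec m" by simp
  fix v :: "complex vec"
  assume v: "v \<in> carrier_vec m" and "v \<bullet>c vec m (\<lambda>i. g_n n (z i)) = 0"
  moreover have "node_pairing m z v (g_n n) = cnj (v \<bullet>c vec m (\<lambda>i. g_n n (z i)))"
    using v by (simp add: node_pairing_def scalar_prod_def cnj_sum lessThan_atLeast0 mult.commute)
  ultimately show "0 \<le> Re ((pick_matrix (f_n n) m z *\<^sub>v v) \<bullet>c v)"
    using quadratic_form_pick_f_n[OF z v] by (simp add: sum_nonneg)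
qed

section \<open>Interpolation at the nodes\<close>

lemma poly_eq_of_agree_on_nodes:
  fixes p q :: "'a :: idom poly"
  assumes inj: "inj_on z {..<m}" and deg: "degree p < m" "degree q < m"
    and agree: "\<And>i. i < m \<Longrightarrow> poly p (z i) = poly q (z i)"
  shows "p = q"
proof (rule ccontr)
  assume "p \<noteq> q"
  hence pq: "p - q \<noteq> 0" by simp
  have "m = card (z ` {..<m})" using card_image[OF inj] by simp
  also have "\<dots> \<le> card {x. poly (p - q) x = 0}"
    by (rule card_mono[OF poly_roots_finite[OF pq]]) (auto simp: agree)
  also have "\<dots> \<le> degree (p - q)" by (rule card_poly_roots_bound[OF pq])
  also have "\<dots> \<le> m - 1" by (rule degree_diff_le) (use deg in auto)
  finally show False using deg by linarith
qed

lemma divided_difference_poly: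
  fixes p :: "'a :: field poly"
  assumes inj: "inj_on z {..<m}" and deg: "degree p < m"
  shows "(\<Sum>i<m. poly p (z i) / (\<Prod>j\<in>{..<m} - {i}. z i - z j)) = coeff p (m - 1)"
proof -
  define D where "D i = (\<Prod>j\<in>{..<m} - {i}. z i - z j)" for i
  define B where "B i = (\<Prod>j\<in>{..<m} - {i}. [:- z j, 1:])" for i
  define L where "L = (\<Sum>i<m. Polynomial.smult (poly p (z i) / D i) (B i))"
  have B: "degree (B i) = m - 1 \<and> coeff (B i) (m - 1) = 1" if "i < m" for i
    using degree_prod_sum_monic[of "{..<m} - {i}" "\<lambda>j. [:- z j, 1:]"] that
    unfolding B_def by (simp add: o_def image_iff)
  have D: "D i \<noteq> 0" if "i < m" for i
    unfolding D_def using inj that by (auto simp: inj_on_def)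
  have poly_B: "poly (B i) (z k) = (if k = i then D i else 0)" if "i < m" "k < m" for i k
    unfolding B_def D_def poly_prod using that by (auto intro: prod_zero)
  have "degree L \<le> m - 1"
    unfolding L_def by (rule degree_sum_le, simp, rule order.trans[OF degree_smult_le]) (use B in auto)
  hence "degree L < m" using deg by linarith
  moreover have "poly L (z k) = poly p (z k)" if k: "k < m" for k
  proof -
    have "poly L (z k) = (\<Sum>i<m. if i = k then poly p (z k) else 0)"
      unfolding L_def poly_sum using k D by (intro sum.cong) (auto simp: poly_B)
    thus ?thesis using k by simp
  qed
  ultimately have "L = p" by (rule poly_eq_of_agree_on_nodes[OF inj _ deg])
  moreover have "coeff L (m - 1) = (\<Sum>i<m. poly p (z i) / D i)"
    unfolding L_def coeff_sum using B by simp
  ultimately show ?thesis unfolding D_def by simp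
qed

lemma coeff_synthetic_div:
  "coeff (synthetic_div p c) k = coeff p (Suc k) + c * coeff (synthetic_div p c) (Suc k)"
  using arg_cong[OF synthetic_div_correct[of p c], of "\<lambda>q. coeff q (Suc k)"] by simp

lemma norm_coeff_synthetic_div_le:
  fixes p :: "'a :: real_normed_field poly"
  assumes c: "norm c \<le> 1" and deg: "degree p \<le> d"
  shows "norm (coeff (synthetic_div p c) k) \<le> (\<Sum>j\<in>{k<..d}. norm (coeff p j))"
proof (induct "d - k" arbitrary: k)
  case 0
  have "coeff (synthetic_div p c) k = 0"
  proof (cases "degree p = 0")
    case False
    thus ?thesis using 0 deg by (intro coeff_eq_0) (simp add: degree_synthetic_div)
  next
    case True
    hence "synthetic_div p c = 0" by (simp add: synthetic_div_eq_0_iff)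
    thus ?thesis by simp
  qed
  thus ?case by (simp add: sum_nonneg)
next
  case (Suc l)
  hence "l = d - Suc k" "Suc k \<le> d" by auto
  note IH = Suc.hyps(1)[OF this(1)]
  have "norm (coeff (synthetic_div p c) k)
      \<le> norm (coeff p (Suc k)) + norm c * norm (coeff (synthetic_div p c) (Suc k))"
    unfolding coeff_synthetic_div[of p c k] by (metis norm_mult norm_triangle_ineq)
  also have "\<dots> \<le> norm (coeff p (Suc k)) + (\<Sum>j\<in>{Suc k<..d}. norm (coeff p j))"
    using IH mult_left_le_one_le[OF _ _ c, of "norm (coeff (synthetic_div p c) (Suc k))"] by simp
  also have "\<dots> = (\<Sum>j\<in>{k<..d}. norm (coeff p j))"
  proof -
    have "{k<..d} = insert (Suc k) {Suc k<..d}" using \<open>Suc k \<le> d\<close> by auto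
    thus ?thesis by simp
  qed
  finally show ?case .
qed

lemma node_poly:
  fixes z :: "nat \<Rightarrow> 'a :: comm_ring_1"
  shows "degree (\<Prod>j<m. [:- z j, 1:]) = m" "coeff (\<Prod>j<m. [:- z j, 1:]) m = 1"
    and "poly (\<Prod>j<m. [:- z j, 1:]) x = (\<Prod>j<m. x - z j)"
proof -
  show "degree (\<Prod>j<m. [:- z j, 1:]) = m" "coeff (\<Prod>j<m. [:- z j, 1:]) m = 1"
    using degree_prod_monic[of m "\<lambda>j. [:- z j, 1:]"] by (simp_all add: lessThan_atLeast0)
  show "poly (\<Prod>j<m. [:- z j, 1:]) x = (\<Prod>j<m. x - z j)"
    unfolding poly_prod by (intro prod.cong) auto
qed

lemma node_poly_root:
  fixes z :: "nat \<Rightarrow> 'a :: comm_ring_1"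
  shows "i < m \<Longrightarrow> poly (\<Prod>j<m. [:- z j, 1:]) (z i) = 0"
  unfolding node_poly by (rule prod_zero) auto

text \<open>The polynomial \<open>c x\<^sup>n - (1/2)\<^sup>n \<omega>(x)\<close> with \<open>c = \<omega>(1/2)\<close> vanishes at \<open>1/2\<close>; at the roots
  of \<omega> the quotient by \<open>x - 1/2\<close> therefore agrees with \<open>2 c g\<^sub>n\<close>.\<close>
definition g_n_interpolant :: "nat \<Rightarrow> complex poly \<Rightarrow> complex poly" where
  "g_n_interpolant n \<omega> =
     synthetic_div (Polynomial.monom (poly \<omega> (1/2)) n - Polynomial.smult ((1/2) ^ n) \<omega>) (1/2)"

lemma poly_g_n_interpolant:
  assumes root: "poly \<omega> x = 0" and x: "x \<noteq> 1/2"
  shows "poly (g_n_interpolant n \<omega>) x = 2 * poly \<omega> (1/2) * g_n n x"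
proof -
  define N where "N = Polynomial.monom (poly \<omega> (1/2)) n - Polynomial.smult ((1/2) ^ n) \<omega>"
  have "poly N (1/2) = 0" unfolding N_def by (simp add: poly_monom)
  hence N: "N = [:- (1/2), 1:] * g_n_interpolant n \<omega>"
    using synthetic_div_correct'[of "1/2" N] unfolding g_n_interpolant_def N_def[symmetric] by simp
  have "poly N x = (x - 1/2) * poly (g_n_interpolant n \<omega>) x" unfolding N by (simp add: algebra_simps)
  moreover have "poly N x = poly \<omega> (1/2) * x ^ n" unfolding N_def using root by (simp add: poly_monom)
  moreover have "2 * x - 1 \<noteq> 0" using x by (auto simp: field_simps)
  ultimately show ?thesis using x unfolding g_n_def by (simp add: field_simps)
qed

lemma degree_g_n_interpolant:
  assumes "degree \<omega> \<le> Suc d" "n \<le> Suc d"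
  shows "degree (g_n_interpolant n \<omega>) \<le> d"
proof -
  have "degree (Polynomial.monom (poly \<omega> (1/2)) n - Polynomial.smult ((1/2) ^ n) \<omega>) \<le> Suc d"
    using assms by (intro degree_diff_le order.trans[OF degree_monom_le] order.trans[OF degree_smult_le])
  thus ?thesis unfolding g_n_interpolant_def degree_synthetic_div by simp
qed

lemma node_pairing_g_n:
  assumes "\<And>i. i < m \<Longrightarrow> poly \<omega> (z i) = 0" "\<And>i. i < m \<Longrightarrow> z i \<noteq> 1/2"
  shows "2 * poly \<omega> (1/2) * node_pairing m z v (g_n n) = node_pairing m z v (poly (g_n_interpolant n \<omega>))"
  unfolding node_pairing_def sum_distrib_left
  using assms by (intro sum.cong) (auto simp: poly_g_n_interpolant)

lemma coeff_g_n_interpolant_top: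
  assumes "degree \<omega> = Suc n" "coeff \<omega> (Suc n) = 1"
  shows "coeff (g_n_interpolant n \<omega>) n = - ((1/2) ^ n)"
proof -
  define N where "N = Polynomial.monom (poly \<omega> (1/2)) n - Polynomial.smult ((1/2) ^ n) \<omega>"
  have "degree (g_n_interpolant n \<omega>) \<le> n" by (rule degree_g_n_interpolant) (simp_all add: assms)
  hence "coeff (g_n_interpolant n \<omega>) (Suc n) = 0" by (simp add: coeff_eq_0)
  hence "coeff (g_n_interpolant n \<omega>) n = coeff N (Suc n)"
    using coeff_synthetic_div[of N "1/2" n] unfolding g_n_interpolant_def N_def[symmetric] by simp
  also have "\<dots> = - ((1/2) ^ n)" using assms(2) unfolding N_def by (simp add: coeff_monom)
  finally show ?thesis .
qed

lemma node_pairing_divided_difference: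
  assumes "inj_on z {..<m}" "degree p < m"
  shows "node_pairing m z (vec m (\<lambda>i. cnj (1 / (\<Prod>j\<in>{..<m} - {i}. z i - z j)))) (poly p)
    = coeff p (m - 1)"
  unfolding node_pairing_def divided_difference_poly[OF assms, symmetric] by (simp add: field_simps)

section \<open>Exactly one negative eigenvalue at \<open>n + 1\<close> nodes\<close>

lemma num_neg_eigenvalues_pick_f_n_Suc:
  assumes inj: "inj_on z {..<Suc n}" and z: "\<And>i. i < Suc n \<Longrightarrow> z i \<in> ball 0 1 - {1/2}"
  shows "num_neg_eigenvalues (pick_matrix (f_n n) (Suc n) z) = 1"
proof -
  define v where "v = vec (Suc n) (\<lambda>i. cnj (1 / (\<Prod>j\<in>{..<Suc n} - {i}. z i - z j)))"
  have v: "v \<in> carrier_vec (Suc n)" unfolding v_def by simp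
  have pairing: "node_pairing (Suc n) z v (poly p) = coeff p n" if "degree p < Suc n" for p
    using node_pairing_divided_difference[OF inj that] unfolding v_def by simp
  have "node_pairing (Suc n) z v (\<lambda>x. x ^ k) = 0" if "k < n" for k
  proof -
    have "poly (Polynomial.monom 1 k) = (\<lambda>x :: complex. x ^ k)" by (simp add: poly_monom fun_eq_iff)
    thus ?thesis using pairing[of "Polynomial.monom 1 k"] that by (simp add: degree_monom_eq coeff_monom)
  qed
  hence moments: "(\<Sum>k<n. (cmod (node_pairing (Suc n) z v (\<lambda>x. x ^ k)))\<^sup>2) = 0" by simp
  define \<omega> where "\<omega> = (\<Prod>j<Suc n. [:- z j, 1:])"
  define R where "R = g_n_interpolant n \<omega>"
  have \<omega>: "degree \<omega> = Suc n" "coeff \<omega> (Suc n) = 1" unfolding \<omega>_def by (rule node_poly)+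
  have "poly \<omega> (1/2) \<noteq> 0" unfolding \<omega>_def node_poly using z by auto
  have "2 * poly \<omega> (1/2) * node_pairing (Suc n) z v (g_n n) = node_pairing (Suc n) z v (poly R)"
    unfolding R_def by (rule node_pairing_g_n) (use z node_poly_root[of _ "Suc n" z] in \<open>auto simp: \<omega>_def\<close>)
  also have "\<dots> = coeff R n"
    using degree_g_n_interpolant[of \<omega> n n] \<omega> unfolding R_def by (intro pairing) auto
  also have "\<dots> = - ((1/2) ^ n)" unfolding R_def by (rule coeff_g_n_interpolant_top[OF \<omega>])
  finally have "node_pairing (Suc n) z v (g_n n) \<noteq> 0" using \<open>poly \<omega> (1/2) \<noteq> 0\<close> by auto
  hence "Re ((pick_matrix (f_n n) (Suc n) z *\<^sub>v v) \<bullet>c v) < 0"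
    using quadratic_form_pick_f_n[OF z v, where n=n] moments by simp
  from num_neg_eigenvalues_pos[OF pick_matrix_carrier pick_matrix_hermitian v this]
    num_neg_eigenvalues_pick_f_n_le_1[where m="Suc n" and z=z and n=n, OF z]
  show ?thesis by simp
qed

section \<open>Positivity at \<open>n\<close> nodes near the origin\<close>

lemma node_pairing_poly:
  assumes "degree p < d"
  shows "node_pairing m z v (poly p) = (\<Sum>k<d. coeff p k * node_pairing m z v (\<lambda>x. x ^ k))"
proof -
  have "poly p x = (\<Sum>k<d. coeff p k * x ^ k)" for x
    unfolding poly_altdef using assms
    by (intro sum.mono_neutral_left) (auto simp: coeff_eq_0)
  thus ?thesis
    unfolding node_pairing_def by (simp add: sum_distrib_left sum_distrib_right mult_ac sum.swap[of _ "{..<m}"])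
qed

lemma norm_coeff_node_poly_le:
  assumes "\<delta> \<le> 1" and "\<And>j. j < m \<Longrightarrow> cmod (z j) \<le> \<delta>" and "k < m"
  shows "cmod (coeff (\<Prod>j<m. [:- z j, 1:]) k) \<le> 2 ^ m * \<delta>"
  using assms(2,3)
proof (induct m arbitrary: k)
  case (Suc m)
  define q where "q = (\<Prod>j<m. [:- z j, 1:])"
  have zm: "cmod (z m) \<le> \<delta>" using Suc.prems(1) by simp
  hence "0 \<le> \<delta>" using norm_ge_zero order_trans by blast
  hence "0 \<le> (2::real) ^ m * \<delta>" by simp
  have IH: "cmod (coeff q k) \<le> 2 ^ m * \<delta>" if "k < m" for k
    unfolding q_def using Suc.prems(1) that by (intro Suc.hyps) auto
  have prod: "(\<Prod>j<Suc m. [:- z j, 1:]) = Polynomial.smult (- z m) q + pCons 0 q"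
    unfolding q_def by (simp add: mult.commute mult_pCons_left)
  have scaled: "cmod (z m * coeff q k) \<le> 2 ^ m * \<delta>" if "k \<le> m" for k
  proof (cases "k = m")
    case True
    have "coeff q m = 1" unfolding q_def by (rule node_poly(2))
    moreover have "\<delta> \<le> 2 ^ m * \<delta>" using \<open>0 \<le> \<delta>\<close> mult_right_mono[of 1 "2 ^ m" \<delta>] by simp
    ultimately show ?thesis using True zm by simp
  next
    case False
    hence "cmod (z m * coeff q k) \<le> \<delta> * (2 ^ m * \<delta>)"
      unfolding norm_mult using that zm IH \<open>0 \<le> \<delta>\<close> by (intro mult_mono) auto
    also have "\<dots> \<le> 2 ^ m * \<delta>" using assms(1) \<open>0 \<le> \<delta>\<close> by (simp add: mult_left_le_one_le)
    finally show ?thesis .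
  qed
  show ?case
  proof (cases k)
    case 0
    thus ?thesis unfolding prod using scaled[of 0] \<open>0 \<le> 2 ^ m * \<delta>\<close> by (simp add: norm_mult)
  next
    case (Suc k')
    have "cmod (coeff (\<Prod>j<Suc m. [:- z j, 1:]) k) \<le> cmod (z m * coeff q k) + cmod (coeff q k')"
      unfolding prod Suc using norm_triangle_ineq4[of "coeff q k'" "z m * coeff q (Suc k')"] by simp
    also have "\<dots> \<le> 2 ^ m * \<delta> + 2 ^ m * \<delta>"
      using Suc Suc.prems(2) by (intro add_mono scaled IH) auto
    finally show ?thesis by (simp add: mult_ac)
  qed
qed simp

lemma norm_coeff_g_n_interpolant_le:
  assumes "\<delta> \<le> 1" and z: "\<And>j. j < n \<Longrightarrow> cmod (z j) \<le> \<delta>"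
  shows "cmod (coeff (g_n_interpolant n (\<Prod>j<n. [:- z j, 1:])) k) \<le> 2 * n * 2 ^ n * \<delta>"
proof -
  define \<omega> where "\<omega> = (\<Prod>j<n. [:- z j, 1:])"
  define N where "N = Polynomial.monom (poly \<omega> (1/2)) n - Polynomial.smult ((1/2) ^ n) \<omega>"
  define S where "S = (\<Sum>j<n. cmod (coeff \<omega> j))"
  have deg_\<omega>: "degree \<omega> = n" and top_\<omega>: "coeff \<omega> n = 1" unfolding \<omega>_def by (rule node_poly)+
  have "S \<le> (\<Sum>j<n. 2 ^ n * \<delta>)"
    unfolding S_def \<omega>_def using assms by (intro sum_mono norm_coeff_node_poly_le) auto
  hence S: "S \<le> n * 2 ^ n * \<delta>" by simp
  have low: "(\<Sum>j<n. cmod (coeff N j)) \<le> S"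
    unfolding S_def N_def
    by (intro sum_mono) (auto simp: coeff_monom norm_mult norm_power power_le_one mult_left_le_one_le)
  have "coeff N n = poly \<omega> (1/2) - (1/2) ^ n" unfolding N_def using top_\<omega> by simp
  also have "\<dots> = (\<Sum>j<n. coeff \<omega> j * (1/2) ^ j)"
    unfolding poly_altdef deg_\<omega> using top_\<omega> by (simp add: lessThan_Suc_atMost[symmetric])
  finally have "cmod (coeff N n) \<le> S"
    unfolding S_def
    by (auto intro!: order.trans[OF norm_sum] sum_mono
        simp: norm_mult norm_power power_le_one mult_right_le_one_le)
  have "cmod (coeff (g_n_interpolant n \<omega>) k) \<le> (\<Sum>j\<in>{k<..n}. cmod (coeff N j))"
    unfolding g_n_interpolant_def N_def[symmetric]
    by (rule norm_coeff_synthetic_div_le)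
      (auto simp: N_def deg_\<omega> intro!: degree_diff_le order.trans[OF degree_monom_le]
        order.trans[OF degree_smult_le])
  also have "\<dots> \<le> (\<Sum>j<Suc n. cmod (coeff N j))" by (rule sum_mono2) auto
  also have "\<dots> \<le> 2 * S" using low \<open>cmod (coeff N n) \<le> S\<close> by simp
  finally show ?thesis unfolding \<omega>_def[symmetric] using S by simp
qed

lemma norm_node_poly_half_ge:
  assumes "\<And>j. j < m \<Longrightarrow> cmod (z j) \<le> 1/4"
  shows "(1/4) ^ m \<le> cmod (poly (\<Prod>j<m. [:- z j, 1:]) (1/2))"
proof -
  have "(\<Prod>j<m. 1/4 :: real) \<le> (\<Prod>j<m. cmod (1/2 - z j))"
  proof (rule prod_mono)
    fix j assume "j \<in> {..<m}"
    with assms have "cmod (1/2 :: complex) - cmod (z j) \<ge> 1/4" by (simp add: norm_divide)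
    thus "0 \<le> (1/4 :: real) \<and> 1/4 \<le> cmod (1/2 - z j)"
      using norm_triangle_ineq2[of "1/2" "z j"] by simp
  qed
  thus ?thesis unfolding node_poly(3) prod_norm[symmetric] by simp
qed

definition psd_radius :: "nat \<Rightarrow> real" where
  "psd_radius n = 1 / (2 * real n ^ 2 * 8 ^ n)"

lemma psd_radius_le: "n \<ge> 1 \<Longrightarrow> psd_radius n \<le> 1/16"
proof -
  assume n: "n \<ge> 1"
  have "(1::real) * 8 \<le> real n ^ 2 * 8 ^ n"
    using n by (intro mult_mono) (auto simp: power_increasing[of 1 n "8::real", simplified])
  thus ?thesis unfolding psd_radius_def by (simp add: field_simps)
qed

lemma norm_lt_half_domain:
  assumes "cmod z < 1/2"
  shows "z \<in> ball 0 1 - {1/2}"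
proof -
  have "z \<noteq> 1/2"
  proof
    assume "z = 1/2"
    with assms show False by (simp add: norm_divide)
  qed
  with assms show ?thesis by simp
qed

lemma norm_node_pairing_g_n_le:
  assumes n: "n \<ge> 1" and z: "\<And>i. i < n \<Longrightarrow> cmod (z i) \<le> psd_radius n"
  shows "cmod (node_pairing n z v (g_n n)) \<le> (\<Sum>k<n. cmod (node_pairing n z v (\<lambda>x. x ^ k))) / (2 * real n)"
proof -
  define M where "M k = node_pairing n z v (\<lambda>x. x ^ k)" for k
  define \<omega> where "\<omega> = (\<Prod>j<n. [:- z j, 1:])"
  define R where "R = g_n_interpolant n \<omega>"
  have "psd_radius n \<le> 1/16" using n by (rule psd_radius_le)
  hence z_small: "cmod (z i) \<le> 1/4" if "i < n" for i using z[OF that] by simp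
  have z_half: "z i \<noteq> 1/2" if "i < n" for i
  proof
    assume "z i = 1/2"
    with z_small[OF that] show False by (simp add: norm_divide)
  qed
  have "degree R \<le> n - 1"
    unfolding R_def using n by (intro degree_g_n_interpolant) (auto simp: \<omega>_def node_poly)
  have "2 * poly \<omega> (1/2) * node_pairing n z v (g_n n) = node_pairing n z v (poly R)"
    unfolding R_def by (rule node_pairing_g_n[OF _ z_half]) (simp_all add: \<omega>_def node_poly_root)
  also have "\<dots> = (\<Sum>k<n. coeff R k * M k)"
    unfolding M_def using \<open>degree R \<le> n - 1\<close> n by (intro node_pairing_poly) auto
  finally have "2 * cmod (poly \<omega> (1/2)) * cmod (node_pairing n z v (g_n n))
      = cmod (\<Sum>k<n. coeff R k * M k)"
    by (metis norm_mult norm_numeral)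
  also have "\<dots> \<le> (\<Sum>k<n. cmod (coeff R k) * cmod (M k))"
    using norm_sum[of "\<lambda>k. coeff R k * M k" "{..<n}"] by (simp add: norm_mult)
  also have "\<dots> \<le> (\<Sum>k<n. (2 * n * 2 ^ n * psd_radius n) * cmod (M k))"
    using norm_coeff_g_n_interpolant_le[of "psd_radius n" n z] \<open>psd_radius n \<le> 1/16\<close> z
    unfolding R_def \<omega>_def by (intro sum_mono mult_right_mono) auto
  finally have "2 * (1/4) ^ n * cmod (node_pairing n z v (g_n n))
      \<le> 2 * n * 2 ^ n * psd_radius n * (\<Sum>k<n. cmod (M k))"
    using mult_right_mono[OF norm_node_poly_half_ge[of n z, folded \<omega>_def, OF z_small]
        norm_ge_zero[of "node_pairing n z v (g_n n)"]]
    by (simp add: sum_distrib_left)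
  hence "cmod (node_pairing n z v (g_n n))
      \<le> 2 * n * 2 ^ n * psd_radius n * (\<Sum>k<n. cmod (M k)) / (2 * (1/4) ^ n)"
    by (simp add: le_divide_eq mult_ac)
  also have "\<dots> = (\<Sum>k<n. cmod (M k)) / (2 * real n)"
  proof -
    have "(2::real) ^ n * 4 ^ n = 8 ^ n" by (simp flip: power_mult_distrib)
    thus ?thesis unfolding psd_radius_def using n by (simp add: power_one_over field_simps power2_eq_square)
  qed
  finally show ?thesis unfolding M_def .
qed

lemma norm_node_pairing_g_n_small:
  assumes n: "n \<ge> 1" and z: "\<And>i. i < n \<Longrightarrow> cmod (z i) \<le> psd_radius n"
  shows "3 * (cmod (node_pairing n z v (g_n n)))\<^sup>2 \<le> (\<Sum>k<n. (cmod (node_pairing n z v (\<lambda>x. x ^ k)))\<^sup>2)"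
proof -
  define S where "S = (\<Sum>k<n. (cmod (node_pairing n z v (\<lambda>x. x ^ k)))\<^sup>2)"
  have "(cmod (node_pairing n z v (g_n n)))\<^sup>2
      \<le> ((\<Sum>k<n. cmod (node_pairing n z v (\<lambda>x. x ^ k))) / (2 * real n))\<^sup>2"
    by (intro power_mono norm_node_pairing_g_n_le[OF n z]) auto
  also have "\<dots> = (\<Sum>k<n. cmod (node_pairing n z v (\<lambda>x. x ^ k)))\<^sup>2 / (4 * real n ^ 2)"
    by (simp add: power_divide power_mult_distrib)
  also have "\<dots> \<le> S * real n / (4 * real n ^ 2)"
    using sum_squared_le_sum_of_squares[of "\<lambda>k. cmod (node_pairing n z v (\<lambda>x. x ^ k))" "{..<n}"]
    by (intro divide_right_mono) (auto simp: S_def)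
  also have "\<dots> = S / (4 * real n)" using n by (simp add: power2_eq_square)
  finally have "3 * (cmod (node_pairing n z v (g_n n)))\<^sup>2 \<le> 3 / (4 * real n) * S" by simp
  also have "\<dots> \<le> S" using n by (intro mult_left_le_one_le) (auto simp: S_def sum_nonneg)
  finally show ?thesis unfolding S_def .
qed

lemma pos_semidef_pick_f_n:
  assumes n: "n \<ge> 1" and z: "\<And>i. i < n \<Longrightarrow> cmod (z i) \<le> psd_radius n"
  shows "pos_semidef (pick_matrix (f_n n) n z)"
  unfolding pos_semidef_def
proof (intro exI[of _ n] conjI pick_matrix_carrier pick_matrix_hermitian ballI)
  have "z i \<in> ball 0 1 - {1/2}" if "i < n" for i
    using z[OF that] psd_radius_le[OF n] by (intro norm_lt_half_domain) simp
  moreover fix v :: "complex vec" assume v: "v \<in> carrier_vec n"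
  ultimately have qf: "(pick_matrix (f_n n) n z *\<^sub>v v) \<bullet>c v = complex_of_real
    ((\<Sum>k<n. (cmod (node_pairing n z v (\<lambda>x. x ^ k)))\<^sup>2) - 3 * (cmod (node_pairing n z v (g_n n)))\<^sup>2)"
    by (rule quadratic_form_pick_f_n)
  show "0 \<le> Re ((pick_matrix (f_n n) n z *\<^sub>v v) \<bullet>c v)"
    unfolding qf using norm_node_pairing_g_n_small[OF n z] by simp
  show "Im ((pick_matrix (f_n n) n z *\<^sub>v v) \<bullet>c v) = 0" unfolding qf by simp
qed

lemma S_kappa_f_n: "S_kappa 1 {1/2} (f_n n)"
  unfolding S_kappa_def
proof (intro conjI allI impI)
  show "admissible_exc {1/2}"
    unfolding admissible_exc_def by (auto simp: norm_divide islimpt_finite)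
  fix m :: nat and z :: "nat \<Rightarrow> complex"
  assume "inj_on z {..<m} \<and> z ` {..<m} \<subseteq> ball 0 1 - {1/2}"
  thus "num_neg_eigenvalues (pick_matrix (f_n n) m z) \<le> 1"
    by (intro num_neg_eigenvalues_pick_f_n_le_1) auto
next
  define z :: "nat \<Rightarrow> complex" where "z i = of_real (real i / real (4 * Suc n))" for i
  have inj: "inj_on z {..<Suc n}"
  proof (rule inj_onI)
    fix i j assume "z i = z j"
    hence "real i / real (4 * Suc n) = real j / real (4 * Suc n)" unfolding z_def of_real_eq_iff .
    thus "i = j" by (simp only: divide_cancel_right) simp
  qed
  moreover have dom: "z i \<in> ball 0 1 - {1/2}" if "i < Suc n" for i
  proof (rule norm_lt_half_domain)
    have "cmod (z i) = real i / real (4 * Suc n)" unfolding z_def norm_of_real by simp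
    also have "\<dots> < 1/2" using that by (simp add: field_simps)
    finally show "cmod (z i) < 1/2" .
  qed
  moreover note num_neg_eigenvalues_pick_f_n_Suc[OF inj dom]
  ultimately show "\<exists>m z. inj_on z {..<m} \<and> z ` {..<m} \<subseteq> ball 0 1 - {1/2} \<and>
      num_neg_eigenvalues (pick_matrix (f_n n) m z) = 1"
    by (intro exI[of _ "Suc n"] exI[of _ z]) auto
qed

theorem mainTheorem10:
  fixes n :: nat and f :: "complex \<Rightarrow> complex"
  assumes "n \<ge> 1"
    and "\<And>z. f z = z ^ n * (2 - z) / (2 * z - 1)"
  shows "S_kappa 1 {1/2} f \<and>
    (\<exists>\<delta>>0. \<forall>z. inj_on z {..<n} \<and> (\<forall>i<n. norm (z i) < \<delta>) \<longrightarrow>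
        pos_semidef (pick_matrix f n z)) \<and>
    (\<exists>\<delta>'>0. \<forall>z. inj_on z {..<Suc n} \<and> (\<forall>i<Suc n. norm (z i) < \<delta>') \<longrightarrow>
        num_neg_eigenvalues (pick_matrix f (Suc n) z) = 1)"
proof -
  have f: "f = f_n n" using assms(2) by (simp add: fun_eq_iff f_n_def)
  have "\<exists>\<delta>>0. \<forall>z. inj_on z {..<n} \<and> (\<forall>i<n. norm (z i) < \<delta>) \<longrightarrow> pos_semidef (pick_matrix f n z)"
    unfolding f
  proof (intro exI[of _ "psd_radius n"] conjI allI impI)
    show "0 < psd_radius n" using assms(1) by (simp add: psd_radius_def)
    fix z :: "nat \<Rightarrow> complex" assume "inj_on z {..<n} \<and> (\<forall>i<n. cmod (z i) < psd_radius n)"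
    thus "pos_semidef (pick_matrix (f_n n) n z)"
      by (intro pos_semidef_pick_f_n[OF assms(1)]) (auto intro: less_imp_le)
  qed
  moreover have "\<exists>\<delta>'>0. \<forall>z. inj_on z {..<Suc n} \<and> (\<forall>i<Suc n. norm (z i) < \<delta>') \<longrightarrow>
      num_neg_eigenvalues (pick_matrix f (Suc n) z) = 1"
    unfolding f
  proof (intro exI[of _ "1/2 :: real"] conjI allI impI)
    fix z :: "nat \<Rightarrow> complex" assume "inj_on z {..<Suc n} \<and> (\<forall>i<Suc n. cmod (z i) < 1/2)"
    thus "num_neg_eigenvalues (pick_matrix (f_n n) (Suc n) z) = 1"
      by (intro num_neg_eigenvalues_pick_f_n_Suc norm_lt_half_domain) auto
  qed simp
  ultimately show ?thesis unfolding f using S_kappa_f_n by blast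
qed

end
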